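(* Let $n\in\mathbb{N}$ and let $X_a,X_b,X_c\subset X$ be the subspaces defined below. Then every function in $X_a\oplus X_b$ is even with respect to $x=1/2$ if $n$ is even and odd with respect to $x=1/2$ if $n$ is odd; every function in $X_c$ is odd with respect to $x=1/2$ if $n$ is even and even with respect to $x=1/2$ if $n$ is odd.
   Context: Let $X=\{u\in H^2(0,1): u'(0)=u'(1)=0,\ \int_0^1u\,dx=0\}$. For $u\in X$ its extension $\tilde u:\mathbb{R}\to\mathbb{R}$ is the $2$-periodic function with $\tilde u(x)=u(x)$ for $0\le x\le 1$ and $\tilde u(x)=u(2-x)$ for $1<x<2$; it lies in $H^2_{per}(\mathbb{R})=\{v\in H^2_{loc}(\mathbb{R}): v(x+2)=v(x)\ \forall x,\ \int_0^2v\,dx=0\}$. On $W=H^2_{per}(\mathbb{R})$ define $(T_nv)(x)=-v(x+1/n)$ and $W_a=N(T_n-I)$, $W_b=N(T_n^{n-1}+\dots+T_n+I)$, $W_c=N(T_n^n+I)$. Define $X_\tau=\{u\in X:\tilde u\in W_\tau\}$ for $\tau\in\{a,b,c\}$; one has $X=X_a\oplus X_b\oplus X_c$. *)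

theory Defs
  imports "HOL-Analysis.Analysis"
begin

text \<open>H^2 on a compact interval [a,b], via the continuous (C^1) representative:
  u is differentiable on [a,b] with derivative u', and u' is absolutely continuous
  with second derivative g in L^2(a,b), i.e. u'(x) = u'(a) + int_a^x g.\<close>
definition H2_with :: "real \<Rightarrow> real \<Rightarrow> (real \<Rightarrow> real) \<Rightarrow> (real \<Rightarrow> real) \<Rightarrow> bool" where
  "H2_with a b u u' \<longleftrightarrow>
     (\<forall>x\<in>{a..b}. (u has_real_derivative u' x) (at x within {a..b})) \<and>
     (\<exists>g. set_integrable lborel {a..b} g \<and>
          set_integrable lborel {a..b} (\<lambda>t. (g t)\<^sup>2) \<and>
          (\<forall>x\<in>{a..b}. u' x = u' a + (LINT t:{a..x}|lborel. g t)))"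

definition H2_on :: "real \<Rightarrow> real \<Rightarrow> (real \<Rightarrow> real) \<Rightarrow> bool" where
  "H2_on a b u \<longleftrightarrow> (\<exists>u'. H2_with a b u u')"

definition Xspace :: "(real \<Rightarrow> real) set" where
  "Xspace = {u. \<exists>u'. H2_with 0 1 u u' \<and> u' 0 = 0 \<and> u' 1 = 0 \<and> integral {0..1} u = 0}"

text \<open>The even 2-periodic extension.\<close>
definition ext :: "(real \<Rightarrow> real) \<Rightarrow> real \<Rightarrow> real" where
  "ext u x = (let y = x - 2 * of_int \<lfloor>x / 2\<rfloor> in if y \<le> 1 then u y else u (2 - y))"

definition Wspace :: "(real \<Rightarrow> real) set" where
  "Wspace = {v. (\<forall>a b. a < b \<longrightarrow> H2_on a b v) \<and> (\<forall>x. v (x + 2) = v x) \<and> integral {0..2} v = 0}"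

definition Tn :: "nat \<Rightarrow> (real \<Rightarrow> real) \<Rightarrow> (real \<Rightarrow> real)" where
  "Tn n v = (\<lambda>x. - v (x + 1 / real n))"

definition Wa :: "nat \<Rightarrow> (real \<Rightarrow> real) set" where
  "Wa n = {v \<in> Wspace. Tn n v = v}"

definition Wb :: "nat \<Rightarrow> (real \<Rightarrow> real) set" where
  "Wb n = {v \<in> Wspace. (\<lambda>x. \<Sum>k<n. ((Tn n ^^ k) v) x) = (\<lambda>x. 0)}"

definition Wc :: "nat \<Rightarrow> (real \<Rightarrow> real) set" where
  "Wc n = {v \<in> Wspace. (Tn n ^^ n) v = (\<lambda>x. - v x)}"

definition Xa :: "nat \<Rightarrow> (real \<Rightarrow> real) set" where
  "Xa n = {u \<in> Xspace. ext u \<in> Wa n}"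
definition Xb :: "nat \<Rightarrow> (real \<Rightarrow> real) set" where
  "Xb n = {u \<in> Xspace. ext u \<in> Wb n}"
definition Xc :: "nat \<Rightarrow> (real \<Rightarrow> real) set" where
  "Xc n = {u \<in> Xspace. ext u \<in> Wc n}"

definition fsum :: "(real \<Rightarrow> real) set \<Rightarrow> (real \<Rightarrow> real) set \<Rightarrow> (real \<Rightarrow> real) set" where
  "fsum A B = {(\<lambda>x. f x + g x) | f g. f \<in> A \<and> g \<in> B}"

definition even_half :: "(real \<Rightarrow> real) \<Rightarrow> bool" where
  "even_half u \<longleftrightarrow> (\<forall>x\<in>{0..1}. u (1 - x) = u x)"
definition odd_half :: "(real \<Rightarrow> real) \<Rightarrow> bool" where
  "odd_half u \<longleftrightarrow> (\<forall>x\<in>{0..1}. u (1 - x) = - u x)"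

end

theory Submission
  imports Defs
begin

(* Since (T_n^n v)(x) = (-1)^n v(x + 1), every v with T_n^n v = e v satisfies
   e v(x - 1) = (-1)^n v(x). This holds with e = 1 on W_a (fixed points of T_n) and on W_b
   (telescoping the vanishing orbit sum), and with e = -1 on W_c. For the even extension
   v of u and x in [0,1] we have v(x - 1) = u(1 - x), so u(1 - x) = e (-1)^n u(x). *)

lemma ext_eq: "x \<in> {0..1} \<Longrightarrow> ext u x = u x"
proof -
  assume "x \<in> {0..1}"
  then have "\<lfloor>x / 2\<rfloor> = 0" by (simp add: floor_eq_iff)
  with \<open>x \<in> {0..1}\<close> show ?thesis by (simp add: ext_def)
qed

lemma ext_minus_one: "x \<in> {0..1} \<Longrightarrow> ext u (x - 1) = u (1 - x)"
proof (cases "x = 1")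
  case True
  then show ?thesis by (simp add: ext_def)
next
  case False
  assume x: "x \<in> {0..1}"
  with False have "\<lfloor>(x - 1) / 2\<rfloor> = -1" by (simp add: floor_eq_iff)
  with x show ?thesis by (auto simp: ext_def Let_def)
qed

lemma funpow_Tn: "((Tn n ^^ k) v) x = (-1) ^ k * v (x + real k / real n)"
proof (induction k arbitrary: x)
  case 0
  then show ?case by simp
next
  case (Suc k)
  have "((Tn n ^^ Suc k) v) x = - ((Tn n ^^ k) v) (x + 1 / real n)"
    by (simp add: Tn_def)
  also have "\<dots> = (-1) ^ Suc k * v (x + real (Suc k) / real n)"
    using Suc by (simp add: add_divide_distrib algebra_simps)
  finally show ?case .
qed

lemma funpow_Tn_self: "n \<ge> 1 \<Longrightarrow> ((Tn n ^^ n) v) x = (-1) ^ n * v (x + 1)"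
  by (simp add: funpow_Tn)

lemma funpow_fixed: "f a = a \<Longrightarrow> (f ^^ k) a = a"
  by (induction k) auto

lemma funpow_Tn_self_if_orbit_sum_zero:
  assumes "(\<lambda>x. \<Sum>k<n. ((Tn n ^^ k) v) x) = (\<lambda>x. 0)"
  shows "(Tn n ^^ n) v = v"
proof
  fix x
  have orbit_sum: "(\<Sum>k<n. ((Tn n ^^ k) v) y) = 0" for y
    using assms by meson
  have shifted_sum: "(\<Sum>k<n. ((Tn n ^^ Suc k) v) x) = 0"
    using orbit_sum[of "x + 1 / real n"] by (simp add: Tn_def sum_negf)
  have "(\<Sum>k<n. ((Tn n ^^ Suc k) v) x) - (\<Sum>k<n. ((Tn n ^^ k) v) x)
        = ((Tn n ^^ n) v) x - v x"
    using sum_lessThan_telescope[of "\<lambda>k. ((Tn n ^^ k) v) x" n]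
    by (simp add: sum_subtractf)
  with orbit_sum[of x] shifted_sum show "((Tn n ^^ n) v) x = v x"
    by simp
qed

lemma reflect_if_funpow_Tn_ext:
  assumes "n \<ge> 1" and "(Tn n ^^ n) (ext u) = (\<lambda>x. c * ext u x)" and "x \<in> {0..1}"
  shows "c * u (1 - x) = (-1) ^ n * u x"
proof -
  have "c * ext u (x - 1) = (-1) ^ n * ext u x"
    using funpow_Tn_self[OF assms(1), of "ext u" "x - 1"] assms(2) by simp
  with assms(3) show ?thesis
    by (simp add: ext_eq ext_minus_one)
qed

lemma reflect_Xa:
  "n \<ge> 1 \<Longrightarrow> u \<in> Xa n \<Longrightarrow> x \<in> {0..1} \<Longrightarrow> u (1 - x) = (-1) ^ n * u x"
  using reflect_if_funpow_Tn_ext[of n u 1 x] funpow_fixed[of "Tn n" "ext u" n]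
  by (simp add: Xa_def Wa_def)

lemma reflect_Xb:
  "n \<ge> 1 \<Longrightarrow> u \<in> Xb n \<Longrightarrow> x \<in> {0..1} \<Longrightarrow> u (1 - x) = (-1) ^ n * u x"
  using reflect_if_funpow_Tn_ext[of n u 1 x] funpow_Tn_self_if_orbit_sum_zero[of n "ext u"]
  by (simp add: Xb_def Wb_def)

lemma reflect_Xc:
  "n \<ge> 1 \<Longrightarrow> u \<in> Xc n \<Longrightarrow> x \<in> {0..1} \<Longrightarrow> u (1 - x) = - ((-1) ^ n * u x)"
  using reflect_if_funpow_Tn_ext[of n u "-1" x] by (simp add: Xc_def Wc_def)

theorem lemma2p8:
  fixes n :: nat
  assumes "n \<ge> 1"
  shows "(\<forall>u \<in> fsum (Xa n) (Xb n). if even n then even_half u else odd_half u) \<and>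
         (\<forall>u \<in> Xc n. if even n then odd_half u else even_half u)"
proof (intro conjI ballI)
  fix u
  assume "u \<in> fsum (Xa n) (Xb n)"
  then obtain f g where u: "u = (\<lambda>x. f x + g x)" and "f \<in> Xa n" and "g \<in> Xb n"
    by (auto simp: fsum_def)
  then have "u (1 - x) = (-1) ^ n * u x" if "x \<in> {0..1}" for x
    using reflect_Xa[OF assms] reflect_Xb[OF assms] that by (simp add: algebra_simps)
  then show "if even n then even_half u else odd_half u"
    by (auto simp: even_half_def odd_half_def)
next
  fix u
  assume "u \<in> Xc n"
  then show "if even n then odd_half u else even_half u"
    using reflect_Xc[OF assms] by (auto simp: even_half_def odd_half_def)
qed

end
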